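(* Let $n\ge 1$, $r\ge 1$, and $A,B\in U(2^n)$. If the $(n+1)$-qubit unitary $$D=\ket{0}\!\bra{0}\otimes A+\ket{1}\!\bra{1}\otimes B$$ lies in $\mathcal{C}_r^{(n+1)}$, then both $A$ and $B$ lie in $\mathcal{C}_r^{(n)}$.
   Context: The $n$-qubit Pauli group is $\mathcal{P}_n=\{\omega P_1\otimes\cdots\otimes P_n:\ \omega\in\{\pm1,\pm \mathrm{i}\},\ P_j\in\{I,X,Y,Z\}\}$. The $n$-qubit Clifford hierarchy is defined recursively by $\mathcal{C}_1^{(n)}:=\mathcal{P}_n$ and $\mathcal{C}_{k+1}^{(n)}:=\{U\in U(2^n):\ UPU^\dagger\in\mathcal{C}_k^{(n)}\text{ for all }P\in\mathcal{P}_n\}$. In $D$, the first tensor factor is a single qubit (the "control") and the second is the $n$-qubit register. *)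

theory Defs
  imports Complex_Main "Jordan_Normal_Form.Matrix"
begin

definition adj :: "complex mat \<Rightarrow> complex mat" where
  "adj M = mat (dim_col M) (dim_row M) (\<lambda>(i,j). cnj (M $$ (j,i)))"

definition unitary :: "nat \<Rightarrow> complex mat \<Rightarrow> bool" where
  "unitary n U \<longleftrightarrow> U \<in> carrier_mat (2^n) (2^n) \<and> U * adj U = 1\<^sub>m (2^n) \<and> adj U * U = 1\<^sub>m (2^n)"

text \<open>Kronecker (tensor) product; the first factor is the most significant one.\<close>
definition kron :: "complex mat \<Rightarrow> complex mat \<Rightarrow> complex mat" where
  "kron A B = mat (dim_row A * dim_row B) (dim_col A * dim_col B)
     (\<lambda>(i,j). A $$ (i div dim_row B, j div dim_col B) * B $$ (i mod dim_row B, j mod dim_col B))"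

fun kron_list :: "complex mat list \<Rightarrow> complex mat" where
  "kron_list [] = 1\<^sub>m 1"
| "kron_list (P # Ps) = kron P (kron_list Ps)"

definition pauli_I :: "complex mat" where
  "pauli_I = mat_of_rows_list 2 [[1, 0], [0, 1]]"
definition pauli_X :: "complex mat" where
  "pauli_X = mat_of_rows_list 2 [[0, 1], [1, 0]]"
definition pauli_Y :: "complex mat" where
  "pauli_Y = mat_of_rows_list 2 [[0, - \<i>], [\<i>, 0]]"
definition pauli_Z :: "complex mat" where
  "pauli_Z = mat_of_rows_list 2 [[1, 0], [0, -1]]"

definition pauli_group :: "nat \<Rightarrow> complex mat set" where
  "pauli_group n = {w \<cdot>\<^sub>m kron_list Ps | w Ps.
      w \<in> {1, -1, \<i>, -\<i>} \<and> length Ps = n \<and> set Ps \<subseteq> {pauli_I, pauli_X, pauli_Y, pauli_Z}}"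

text \<open>The n-qubit Clifford hierarchy: clifford n k is the k-th level (k \<ge> 1);
  level 0 is unused and set to the empty set.\<close>
fun clifford :: "nat \<Rightarrow> nat \<Rightarrow> complex mat set" where
  "clifford n 0 = {}"
| "clifford n (Suc 0) = pauli_group n"
| "clifford n (Suc (Suc k)) =
     {U. unitary n U \<and> (\<forall>P \<in> pauli_group n. U * P * adj U \<in> clifford n (Suc k))}"

definition proj0 :: "complex mat" where
  "proj0 = mat_of_rows_list 2 [[1, 0], [0, 0]]"
definition proj1 :: "complex mat" where
  "proj1 = mat_of_rows_list 2 [[0, 0], [0, 1]]"

end

theory Submission
  imports Defs
begin

(* D is the block-diagonal matrix diag(A, B), and the claim follows by induction on the level r.
   A Pauli string P (x) Q is block diagonal only if P is I or Z, and then its diagonal blocks are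
   Q up to a phase; this is the case r = 1. For the step, D is unitary only if A and B are, and
   conjugating I (x) P = diag(P, P) by D gives diag(A P adj A, B P adj B), which lies one level
   lower; the induction hypothesis then places A P adj A and B P adj B one level lower for n
   qubits. *)

abbreviation paulis :: "complex mat set" where
  "paulis \<equiv> {pauli_I, pauli_X, pauli_Y, pauli_Z}"

abbreviation phases :: "complex set" where
  "phases \<equiv> {1, -1, \<i>, -\<i>}"

abbreviation block_diag_mat :: "'a::zero mat \<Rightarrow> 'a mat \<Rightarrow> 'a mat" where
  "block_diag_mat A B \<equiv> four_block_mat A (0\<^sub>m (dim_row A) (dim_col B)) (0\<^sub>m (dim_row B) (dim_col A)) B"

lemma smult_mat_zero_left [simp]: "(0::'a::mult_zero) \<cdot>\<^sub>m A = 0\<^sub>m (dim_row A) (dim_col A)"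
  by (rule eq_matI) simp_all

lemma smult_mat_one_left [simp]: "(1::'a::monoid_mult) \<cdot>\<^sub>m A = A"
  by (rule eq_matI) simp_all

lemma smult_smult_mat: "a \<cdot>\<^sub>m (b \<cdot>\<^sub>m A) = (a * b :: 'a::semigroup_mult) \<cdot>\<^sub>m A"
  by (rule eq_matI) (simp_all add: mult.assoc)

lemma smult_mat_eq_zero_iff:
  fixes c :: "'a::semiring_no_zero_divisors"
  shows "c \<cdot>\<^sub>m A = 0\<^sub>m (dim_row A) (dim_col A) \<longleftrightarrow> c = 0 \<or> A = 0\<^sub>m (dim_row A) (dim_col A)"
  by (auto simp: mat_eq_iff)

lemma mat_of_rows_list_2x2_carrier: "mat_of_rows_list 2 [[a, b], [c, d]] \<in> carrier_mat 2 2"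
  unfolding mat_of_rows_list_def carrier_mat_def by simp

(* Stated with Suc 0, the simp normal form of the index 1. *)
lemma index_mat_of_rows_list_2x2:
  "mat_of_rows_list 2 [[a, b], [c, d]] $$ (0, 0) = a"
  "mat_of_rows_list 2 [[a, b], [c, d]] $$ (0, Suc 0) = b"
  "mat_of_rows_list 2 [[a, b], [c, d]] $$ (Suc 0, 0) = c"
  "mat_of_rows_list 2 [[a, b], [c, d]] $$ (Suc 0, Suc 0) = d"
  by (simp_all add: mat_of_rows_list_def)

lemmas mat_of_rows_list_2x2 = mat_of_rows_list_2x2_carrier index_mat_of_rows_list_2x2

lemma split_block_four_block_mat:
  assumes "A \<in> carrier_mat nr1 nc1" "B \<in> carrier_mat nr1 nc2"
    "C \<in> carrier_mat nr2 nc1" "D \<in> carrier_mat nr2 nc2"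
  shows "split_block (four_block_mat A B C D) nr1 nc1 = (A, B, C, D)"
  using assms unfolding split_block_def Let_def
  by (auto intro!: eq_matI)

lemma four_block_mat_inject:
  assumes "A \<in> carrier_mat nr1 nc1" "B \<in> carrier_mat nr1 nc2"
    "C \<in> carrier_mat nr2 nc1" "D \<in> carrier_mat nr2 nc2"
    and "A' \<in> carrier_mat nr1 nc1" "B' \<in> carrier_mat nr1 nc2"
    "C' \<in> carrier_mat nr2 nc1" "D' \<in> carrier_mat nr2 nc2"
  shows "four_block_mat A B C D = four_block_mat A' B' C' D' \<longleftrightarrow> A = A' \<and> B = B' \<and> C = C' \<and> D = D'"
proof
  assume "four_block_mat A B C D = four_block_mat A' B' C' D'"
  then have "split_block (four_block_mat A B C D) nr1 nc1 = split_block (four_block_mat A' B' C' D') nr1 nc1"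
    by simp
  then show "A = A' \<and> B = B' \<and> C = C' \<and> D = D'"
    unfolding split_block_four_block_mat[OF assms(1-4)] split_block_four_block_mat[OF assms(5-8)]
    by simp
qed simp

lemma mult_add_less_mult:
  fixes a i p m :: nat
  assumes "a < p" "i < m"
  shows "a * m + i < p * m"
proof -
  have "a * m + i < Suc a * m" using assms(2) by simp
  also have "\<dots> \<le> p * m" using assms(1) by (intro mult_le_mono1) simp
  finally show ?thesis .
qed

lemma div_mod_less_double:
  fixes i m :: nat
  assumes "i < m + m"
  shows "i div m = (if i < m then 0 else 1)" "i mod m = (if i < m then i else i - m)"
  using assms by (auto simp: div_if mod_if)

lemma kron_carrier_mat:
  "P \<in> carrier_mat p q \<Longrightarrow> Q \<in> carrier_mat m k \<Longrightarrow> kron P Q \<in> carrier_mat (p * m) (q * k)"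
  by (simp add: kron_def)

lemma kron_index:
  assumes "P \<in> carrier_mat p q" "Q \<in> carrier_mat m k"
    and "a < p" "b < q" "i < m" "j < k"
  shows "kron P Q $$ (a * m + i, b * k + j) = P $$ (a, b) * Q $$ (i, j)"
  using assms mult_add_less_mult[of a p i m] mult_add_less_mult[of b q j k]
  by (simp add: kron_def)

lemma kron_smult_right: "kron P (c \<cdot>\<^sub>m Q) = c \<cdot>\<^sub>m kron P Q"
proof (rule eq_matI)
  fix i j assume "i < dim_row (c \<cdot>\<^sub>m kron P Q)" "j < dim_col (c \<cdot>\<^sub>m kron P Q)"
  then have "0 < dim_row Q" "0 < dim_col Q"
    by (auto simp: kron_def intro!: gr0I)
  then have "i mod dim_row Q < dim_row Q" "j mod dim_col Q < dim_col Q"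
    by simp_all
  with \<open>i < _\<close> \<open>j < _\<close> show "kron P (c \<cdot>\<^sub>m Q) $$ (i, j) = (c \<cdot>\<^sub>m kron P Q) $$ (i, j)"
    by (simp add: kron_def)
qed (simp_all add: kron_def)

lemma kron_neq_zero_mat:
  assumes P: "P \<in> carrier_mat p q" "P \<noteq> 0\<^sub>m p q" and Q: "Q \<in> carrier_mat m k" "Q \<noteq> 0\<^sub>m m k"
  shows "kron P Q \<noteq> 0\<^sub>m (p * m) (q * k)"
proof -
  obtain a b where ab: "a < p" "b < q" "P $$ (a, b) \<noteq> 0"
    using P by (auto simp: mat_eq_iff)
  obtain i j where ij: "i < m" "j < k" "Q $$ (i, j) \<noteq> 0"
    using Q by (auto simp: mat_eq_iff)
  have "kron P Q $$ (a * m + i, b * k + j) \<noteq> 0"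
    using kron_index[OF P(1) Q(1) ab(1,2) ij(1,2)] ab(3) ij(3) by simp
  moreover have "a * m + i < p * m" "b * k + j < q * k"
    using ab ij by (simp_all add: mult_add_less_mult)
  ultimately show ?thesis
    by auto
qed

lemma kron_eq_four_block_mat:
  assumes P: "P \<in> carrier_mat 2 2" and Q: "Q \<in> carrier_mat m k"
  shows "kron P Q = four_block_mat (P $$ (0,0) \<cdot>\<^sub>m Q) (P $$ (0,1) \<cdot>\<^sub>m Q)
                                   (P $$ (1,0) \<cdot>\<^sub>m Q) (P $$ (1,1) \<cdot>\<^sub>m Q)" (is "_ = ?F")
proof (rule eq_matI)
  fix i j assume "i < dim_row ?F" "j < dim_col ?F"
  then have "i < m + m" "j < k + k"
    using Q by auto
  moreover have "kron P Q $$ (i, j) = P $$ (i div m, j div k) * Q $$ (i mod m, j mod k)"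
    using P Q \<open>i < m + m\<close> \<open>j < k + k\<close> by (simp add: kron_def mult_2)
  ultimately show "kron P Q $$ (i, j) = ?F $$ (i, j)"
    using Q div_mod_less_double[of i m] div_mod_less_double[of j k] by simp
qed (use P Q in \<open>auto simp: kron_def\<close>)

lemma kron_proj_eq_block_diag_mat:
  assumes "A \<in> carrier_mat m m" "B \<in> carrier_mat m m"
  shows "kron proj0 A + kron proj1 B = block_diag_mat A B"
proof -
  have "kron proj0 A = four_block_mat A (0\<^sub>m m m) (0\<^sub>m m m) (0\<^sub>m m m)"
    using assms by (simp add: kron_eq_four_block_mat proj0_def mat_of_rows_list_2x2)
  moreover have "kron proj1 B = four_block_mat (0\<^sub>m m m) (0\<^sub>m m m) (0\<^sub>m m m) B"
    using assms by (simp add: kron_eq_four_block_mat proj1_def mat_of_rows_list_2x2)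
  ultimately show ?thesis
    using assms
    by (simp add: add_four_block_mat[of A m m "0\<^sub>m m m" m "0\<^sub>m m m" m "0\<^sub>m m m"
                                        "0\<^sub>m m m" "0\<^sub>m m m" "0\<^sub>m m m" B])
qed

lemma kron_pauli_I_eq_block_diag_mat:
  assumes "A \<in> carrier_mat m k"
  shows "kron pauli_I A = block_diag_mat A A"
  using assms by (simp add: kron_eq_four_block_mat pauli_I_def mat_of_rows_list_2x2)

lemma block_diag_mat_inject:
  assumes "A \<in> carrier_mat m m" "B \<in> carrier_mat m m" "A' \<in> carrier_mat m m" "B' \<in> carrier_mat m m"
  shows "block_diag_mat A B = block_diag_mat A' B' \<longleftrightarrow> A = A' \<and> B = B'"
  using assms four_block_mat_inject[of A m m _ m _ m B] by simp

lemma mult_block_diag_mat: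
  assumes "A \<in> carrier_mat m m" "B \<in> carrier_mat m m" "A' \<in> carrier_mat m m" "B' \<in> carrier_mat m m"
  shows "block_diag_mat A B * block_diag_mat A' B' = block_diag_mat (A * A') (B * B')"
  using assms by (simp add: mult_four_block_mat[of _ m m _ m _ m _ _ m _ m])

lemma adj_carrier_mat: "A \<in> carrier_mat m k \<Longrightarrow> adj A \<in> carrier_mat k m"
  by (simp add: adj_def)

lemma adj_block_diag_mat:
  assumes "A \<in> carrier_mat m m" "B \<in> carrier_mat m m"
  shows "adj (block_diag_mat A B) = block_diag_mat (adj A) (adj B)"
  by (rule eq_matI) (use assms in \<open>auto simp: adj_def\<close>)

lemma conj_block_diag_mat:
  assumes A: "A \<in> carrier_mat m m" and B: "B \<in> carrier_mat m m" and P: "P \<in> carrier_mat m m"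
  shows "block_diag_mat A B * block_diag_mat P P * adj (block_diag_mat A B)
       = block_diag_mat (A * P * adj A) (B * P * adj B)"
proof -
  have "A * P \<in> carrier_mat m m" "B * P \<in> carrier_mat m m"
       "adj A \<in> carrier_mat m m" "adj B \<in> carrier_mat m m"
    using A B P by (auto simp: adj_carrier_mat)
  then show ?thesis
    unfolding mult_block_diag_mat[OF A B P P] adj_block_diag_mat[OF A B]
    by (rule mult_block_diag_mat)
qed

lemma unitary_block_diag_matD:
  assumes A: "A \<in> carrier_mat (2^n) (2^n)" and B: "B \<in> carrier_mat (2^n) (2^n)"
    and U: "unitary (Suc n) (block_diag_mat A B)"
  shows "unitary n A \<and> unitary n B"
proof -
  let ?m = "2^n :: nat"
  have adj: "adj A \<in> carrier_mat ?m ?m" "adj B \<in> carrier_mat ?m ?m"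
    using A B by (simp_all add: adj_carrier_mat)
  have one: "1\<^sub>m (2^Suc n) = block_diag_mat (1\<^sub>m ?m) (1\<^sub>m ?m :: complex mat)"
    by (simp add: mult_2)
  have "block_diag_mat (A * adj A) (B * adj B) = block_diag_mat A B * adj (block_diag_mat A B)"
    unfolding adj_block_diag_mat[OF A B] mult_block_diag_mat[OF A B adj] ..
  also have "\<dots> = block_diag_mat (1\<^sub>m ?m) (1\<^sub>m ?m)"
    using U one unfolding unitary_def by simp
  finally have right: "A * adj A = 1\<^sub>m ?m \<and> B * adj B = 1\<^sub>m ?m"
    using A B adj block_diag_mat_inject[of "A * adj A" ?m "B * adj B" "1\<^sub>m ?m" "1\<^sub>m ?m"] by auto
  have "block_diag_mat (adj A * A) (adj B * B) = adj (block_diag_mat A B) * block_diag_mat A B"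
    unfolding adj_block_diag_mat[OF A B] mult_block_diag_mat[OF adj A B] ..
  also have "\<dots> = block_diag_mat (1\<^sub>m ?m) (1\<^sub>m ?m)"
    using U one unfolding unitary_def by simp
  finally have left: "adj A * A = 1\<^sub>m ?m \<and> adj B * B = 1\<^sub>m ?m"
    using A B adj block_diag_mat_inject[of "adj A * A" ?m "adj B * B" "1\<^sub>m ?m" "1\<^sub>m ?m"] by auto
  show ?thesis
    using A B left right unfolding unitary_def by simp
qed

lemma pauli_carrier_mat: "P \<in> paulis \<Longrightarrow> P \<in> carrier_mat 2 2"
  by (auto simp: pauli_I_def pauli_X_def pauli_Y_def pauli_Z_def mat_of_rows_list_2x2)

lemma pauli_neq_zero_mat: "P \<in> paulis \<Longrightarrow> P \<noteq> 0\<^sub>m 2 2"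
proof
  assume "P \<in> paulis" "P = 0\<^sub>m 2 2"
  moreover have "P $$ (0, 0) \<noteq> 0 \<or> P $$ (0, 1) \<noteq> 0"
    using \<open>P \<in> paulis\<close>
    by (auto simp: pauli_I_def pauli_X_def pauli_Y_def pauli_Z_def index_mat_of_rows_list_2x2)
  ultimately show False
    by auto
qed

lemma pauli_offdiag_zero_diag_sign:
  assumes "P \<in> paulis" "P $$ (0, 1) = 0"
  shows "P $$ (0, 0) \<in> {1, -1} \<and> P $$ (1, 1) \<in> {1, -1}"
  using assms by (auto simp: pauli_I_def pauli_X_def pauli_Y_def pauli_Z_def index_mat_of_rows_list_2x2)

lemma kron_list_carrier_mat:
  "set Ps \<subseteq> paulis \<Longrightarrow> kron_list Ps \<in> carrier_mat (2^length Ps) (2^length Ps)"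
  by (induction Ps) (auto simp: pauli_carrier_mat kron_carrier_mat)

lemma kron_list_neq_zero_mat:
  "set Ps \<subseteq> paulis \<Longrightarrow> kron_list Ps \<noteq> 0\<^sub>m (2^length Ps) (2^length Ps)"
proof (induction Ps)
  case (Cons P Ps)
  then have P: "P \<in> paulis" and Ps: "set Ps \<subseteq> paulis"
    by simp_all
  show ?case
    using kron_neq_zero_mat[OF pauli_carrier_mat[OF P] pauli_neq_zero_mat[OF P]
        kron_list_carrier_mat[OF Ps] Cons.IH[OF Ps]]
    by simp
qed (simp add: mat_eq_iff)

lemma pauli_groupI:
  "w \<in> phases \<Longrightarrow> length Ps = n \<Longrightarrow> set Ps \<subseteq> paulis \<Longrightarrow> w \<cdot>\<^sub>m kron_list Ps \<in> pauli_group n"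
  unfolding pauli_group_def by blast

lemma pauli_groupE:
  assumes "P \<in> pauli_group n"
  obtains w Ps where "P = w \<cdot>\<^sub>m kron_list Ps" "w \<in> phases" "length Ps = n" "set Ps \<subseteq> paulis"
  using assms unfolding pauli_group_def by blast

lemma pauli_group_carrier_mat:
  assumes "P \<in> pauli_group n"
  shows "P \<in> carrier_mat (2^n) (2^n)"
proof -
  obtain w Ps where P: "P = w \<cdot>\<^sub>m kron_list Ps" and "length Ps = n" "set Ps \<subseteq> paulis"
    using assms by (rule pauli_groupE)
  then have "kron_list Ps \<in> carrier_mat (2^n) (2^n)"
    using kron_list_carrier_mat by blast
  then show ?thesis
    by (simp add: P)
qed

lemma kron_pauli_I_mem_pauli_group:
  assumes "P \<in> pauli_group n"
  shows "kron pauli_I P \<in> pauli_group (Suc n)"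
proof -
  obtain w Ps where P: "P = w \<cdot>\<^sub>m kron_list Ps" and "w \<in> phases" "length Ps = n" "set Ps \<subseteq> paulis"
    using assms by (rule pauli_groupE)
  then have "w \<cdot>\<^sub>m kron_list (pauli_I # Ps) \<in> pauli_group (Suc n)"
    by (intro pauli_groupI) auto
  moreover have "kron pauli_I P = w \<cdot>\<^sub>m kron_list (pauli_I # Ps)"
    by (simp add: P kron_smult_right)
  ultimately show ?thesis
    by (simp only:)
qed

lemma block_diag_mat_mem_pauli_group:
  assumes A: "A \<in> carrier_mat (2^n) (2^n)" and B: "B \<in> carrier_mat (2^n) (2^n)"
    and D: "block_diag_mat A B \<in> pauli_group (Suc n)"
  shows "A \<in> pauli_group n \<and> B \<in> pauli_group n"
proof -
  let ?m = "2^n :: nat"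
  obtain w Ps' where D_eq: "block_diag_mat A B = w \<cdot>\<^sub>m kron_list Ps'" and w: "w \<in> phases"
    and Ps': "length Ps' = Suc n" "set Ps' \<subseteq> paulis"
    using D by (rule pauli_groupE)
  then obtain P Ps where Ps'_eq: "Ps' = P # Ps" and P: "P \<in> paulis"
    and Ps: "length Ps = n" "set Ps \<subseteq> paulis"
    by (cases Ps') auto
  define Q where "Q = kron_list Ps"
  have Q: "Q \<in> carrier_mat ?m ?m" "Q \<noteq> 0\<^sub>m ?m ?m"
    unfolding Q_def using kron_list_carrier_mat[OF Ps(2)] kron_list_neq_zero_mat[OF Ps(2)] Ps(1)
    by simp_all
  have "block_diag_mat A B = four_block_mat ((w * P $$ (0,0)) \<cdot>\<^sub>m Q) ((w * P $$ (0,1)) \<cdot>\<^sub>m Q)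
                                           ((w * P $$ (1,0)) \<cdot>\<^sub>m Q) ((w * P $$ (1,1)) \<cdot>\<^sub>m Q)"
    unfolding D_eq Ps'_eq kron_list.simps Q_def[symmetric]
      kron_eq_four_block_mat[OF pauli_carrier_mat[OF P] Q(1)]
    using Q(1) by (simp add: smult_four_block_mat[of _ ?m ?m _ ?m _ ?m] smult_smult_mat)
  then have A_eq: "A = (w * P $$ (0,0)) \<cdot>\<^sub>m Q" and B_eq: "B = (w * P $$ (1,1)) \<cdot>\<^sub>m Q"
    and "(w * P $$ (0,1)) \<cdot>\<^sub>m Q = 0\<^sub>m ?m ?m"
    using four_block_mat_inject[of A ?m ?m _ ?m _ ?m B] A B Q(1) by auto
  then have "P $$ (0,1) = 0"
    using Q w smult_mat_eq_zero_iff[of "w * P $$ (0,1)" Q] by auto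
  then have "w * P $$ (0,0) \<in> phases" "w * P $$ (1,1) \<in> phases"
    using pauli_offdiag_zero_diag_sign[OF P] w by auto
  then show ?thesis
    unfolding A_eq B_eq Q_def using Ps by (simp add: pauli_groupI)
qed

lemma block_diag_mat_mem_clifford:
  assumes "A \<in> carrier_mat (2^n) (2^n)" and "B \<in> carrier_mat (2^n) (2^n)"
    and "block_diag_mat A B \<in> clifford (Suc n) r"
  shows "A \<in> clifford n r \<and> B \<in> clifford n r"
  using assms
proof (induction r arbitrary: A B)
  case (Suc r)
  let ?D = "block_diag_mat A B"
  note A = Suc.prems(1) and B = Suc.prems(2)
  show ?case
  proof (cases r)
    case 0
    then show ?thesis
      using Suc.prems block_diag_mat_mem_pauli_group by simp
  next
    case (Suc k)
    then have U: "unitary (Suc n) ?D"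
      and conj: "\<And>P. P \<in> pauli_group (Suc n) \<Longrightarrow> ?D * P * adj ?D \<in> clifford (Suc n) r"
      using \<open>?D \<in> clifford (Suc n) (Suc r)\<close> by auto
    have "A * P * adj A \<in> clifford n r \<and> B * P * adj B \<in> clifford n r"
      if P: "P \<in> pauli_group n" for P
    proof -
      have P_carrier: "P \<in> carrier_mat (2^n) (2^n)"
        using P by (rule pauli_group_carrier_mat)
      have "?D * block_diag_mat P P * adj ?D \<in> clifford (Suc n) r"
        using conj kron_pauli_I_mem_pauli_group[OF P]
        unfolding kron_pauli_I_eq_block_diag_mat[OF P_carrier] by blast
      then have "block_diag_mat (A * P * adj A) (B * P * adj B) \<in> clifford (Suc n) r"
        unfolding conj_block_diag_mat[OF A B P_carrier] .
      moreover have "A * P * adj A \<in> carrier_mat (2^n) (2^n)" "B * P * adj B \<in> carrier_mat (2^n) (2^n)"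
        using A B P_carrier by (auto intro!: mult_carrier_mat adj_carrier_mat)
      ultimately show ?thesis
        using Suc.IH by blast
    qed
    then show ?thesis
      using unitary_block_diag_matD[OF A B U] \<open>r = Suc k\<close> by simp
  qed
qed simp

theorem mainTheorem1:
  fixes n r :: nat and A B :: "complex mat"
  assumes "n \<ge> 1" and "r \<ge> 1"
    and "unitary n A" and "unitary n B"
    and "kron proj0 A + kron proj1 B \<in> clifford (n + 1) r"
  shows "A \<in> clifford n r \<and> B \<in> clifford n r"
proof -
  have A: "A \<in> carrier_mat (2^n) (2^n)" and B: "B \<in> carrier_mat (2^n) (2^n)"
    using assms(3,4) unfolding unitary_def by simp_all
  have "block_diag_mat A B \<in> clifford (Suc n) r"
    using assms(5) unfolding kron_proj_eq_block_diag_mat[OF A B] by simp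
  then show ?thesis
    using block_diag_mat_mem_clifford[OF A B] by blast
qed

end
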